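(* Assume $PS(h,P_h)>PS(\ell,P_h)$ and $PS(\ell,P_\ell)>PS(h,P_\ell)$. Fix an integer $d\ge 2$. Consider a sequence of peer prediction instances indexed by $n$, with the following properties: - they all share the same values of $P(h)$, $P(h\mid h)$, $P(h\mid\ell)$ and the same $PS$; - for each $n$, the admissible family $\mathcal D_n$ contains some set $D_n\subseteq[n]$ with $|D_n|=d$; - for each signal profile $s_D\in\{\ell,h\}^d$ of $D_n$ containing at least one $h$ and at least one $\ell$, the conditional probability $p(s_D)=Q_n(\Psi_j=h\mid \Psi_{D_n}=s_D)$ for $j\notin D_n$ does not depend on $n$. Then for all sufficiently large $n$, the truthful profile $\Sigma^*$ is not an interim $\mathcal D_n$ equilibrium.
   Context: Peer prediction setting. There are $n$ agents. Signals $\Psi_i\in\{\ell,h\}$ are drawn from a symmetric common prior $Q_n$ on $\{\ell,h\}^n$. $P(s\mid s')$ is the probability that another agent has signal $s$ given that one's own signal is $s'$, and $P_{s'}=P(\cdot\mid s')$. Standing assumptions: $P(\ell),P(h)>0$, $P(h\mid h)>P(h\mid\ell)$, $P(h\mid\ell)>0$ and $P(\ell\mid h)>0$. $PS$ is a strictly proper scoring rule. Each agent reports $r_i\in\{\ell,h\}$ and receives $v_i=\frac1{n-1}\sum_{j\ne i}PS(r_j,P_{r_i})$. Strategies map signals to distributions over reports, and $\Sigma^*$ is the profile in which every agent reports truthfully. Given a family $\mathcal D$ of admissible subsets of $[n]$, a profile $\Sigma$ is an interim $\mathcal D$ equilibrium if there do not exist $D\in\mathcal D$, a signal profile $s_D=(s_i)_{i\in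 D}$, and a profile $\Sigma'$ such that: (1) $\sigma'_i=\sigma_i$ for all $i\notin D$; and (2) for all $i\in D$, $u_i(\Sigma'\mid s_D)>u_i(\Sigma\mid s_D)$. Here $u_i(\cdot\mid s_D)$ is $i$'s expected utility conditioned on the signals of all members of $D$ being $s_D$. *)

theory Defs
  imports Complex_Main "HOL-Library.FuncSet" "HOL-Combinatorics.Permutations"
begin

(* Signals / reports: True = h, False = l.  Agents: [n] = {..<n}. *)

definition profiles :: "nat set \<Rightarrow> (nat \<Rightarrow> bool) set" where
  "profiles A = PiE A (\<lambda>_. UNIV)"

definition symmetric_prior :: "nat \<Rightarrow> ((nat \<Rightarrow> bool) \<Rightarrow> real) \<Rightarrow> bool" where
  "symmetric_prior n Q \<longleftrightarrow>
     (\<forall>\<psi>\<in>profiles {..<n}. Q \<psi> \<ge> 0) \<and>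
     (\<Sum>\<psi>\<in>profiles {..<n}. Q \<psi>) = 1 \<and>
     (\<forall>\<pi> \<psi>. \<pi> permutes {..<n} \<longrightarrow> \<psi> \<in> profiles {..<n} \<longrightarrow> Q (\<psi> \<circ> \<pi>) = Q \<psi>)"

definition prQ :: "nat \<Rightarrow> ((nat \<Rightarrow> bool) \<Rightarrow> real) \<Rightarrow> ((nat \<Rightarrow> bool) \<Rightarrow> bool) \<Rightarrow> real" where
  "prQ n Q E = (\<Sum>\<psi>\<in>{\<psi>\<in>profiles {..<n}. E \<psi>}. Q \<psi>)"

(* P(h): probability that an agent (agent 0; by symmetry any) has signal h *)
definition Ph :: "nat \<Rightarrow> ((nat \<Rightarrow> bool) \<Rightarrow> real) \<Rightarrow> real" where
  "Ph n Q = prQ n Q (\<lambda>\<psi>. \<psi> 0)"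

(* P(h | s'): probability that another agent (agent 1) has h given own (agent 0) signal s' *)
definition Pcond :: "nat \<Rightarrow> ((nat \<Rightarrow> bool) \<Rightarrow> real) \<Rightarrow> bool \<Rightarrow> real" where
  "Pcond n Q s' = prQ n Q (\<lambda>\<psi>. \<psi> 0 = s' \<and> \<psi> 1) / prQ n Q (\<lambda>\<psi>. \<psi> 0 = s')"

definition valid_prior :: "nat \<Rightarrow> ((nat \<Rightarrow> bool) \<Rightarrow> real) \<Rightarrow> bool" where
  "valid_prior n Q \<longleftrightarrow> n \<ge> 2 \<and> symmetric_prior n Q \<and>
     1 - Ph n Q > 0 \<and> Ph n Q > 0 \<and>
     Pcond n Q True > Pcond n Q False \<and>
     Pcond n Q False > 0 \<and> 1 - Pcond n Q True > 0"

(* Binary scoring rule PS r q: score of outcome r (True = h) under the forecast giving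
   probability q to h.  Strict properness on forecasts q in [0,1]. *)
definition strictly_proper :: "(bool \<Rightarrow> real \<Rightarrow> real) \<Rightarrow> bool" where
  "strictly_proper PS \<longleftrightarrow>
     (\<forall>p\<in>{0..1}. \<forall>q\<in>{0..1}. p \<noteq> q \<longrightarrow>
        p * PS True q + (1 - p) * PS False q < p * PS True p + (1 - p) * PS False p)"

(* Strategy profile: Sigma i s = probability that agent i reports h when its signal is s *)
definition valid_profile :: "nat \<Rightarrow> (nat \<Rightarrow> bool \<Rightarrow> real) \<Rightarrow> bool" where
  "valid_profile n \<Sigma> \<longleftrightarrow> (\<forall>i<n. \<forall>s. 0 \<le> \<Sigma> i s \<and> \<Sigma> i s \<le> 1)"

definition truthful :: "nat \<Rightarrow> bool \<Rightarrow> real" where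
  "truthful i s = (if s then 1 else 0)"

definition rprob :: "real \<Rightarrow> bool \<Rightarrow> real" where
  "rprob x r = (if r then x else 1 - x)"

definition payment :: "nat \<Rightarrow> ((nat \<Rightarrow> bool) \<Rightarrow> real) \<Rightarrow> (bool \<Rightarrow> real \<Rightarrow> real)
     \<Rightarrow> (nat \<Rightarrow> bool) \<Rightarrow> nat \<Rightarrow> real" where
  "payment n Q PS r i =
     (\<Sum>j\<in>{..<n} - {i}. PS (r j) (Pcond n Q (r i))) / (real n - 1)"

definition exp_payment :: "nat \<Rightarrow> ((nat \<Rightarrow> bool) \<Rightarrow> real) \<Rightarrow> (bool \<Rightarrow> real \<Rightarrow> real)
     \<Rightarrow> (nat \<Rightarrow> bool \<Rightarrow> real) \<Rightarrow> (nat \<Rightarrow> bool) \<Rightarrow> nat \<Rightarrow> real" where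
  "exp_payment n Q PS \<Sigma> \<psi> i =
     (\<Sum>r\<in>profiles {..<n}. (\<Prod>k<n. rprob (\<Sigma> k (\<psi> k)) (r k)) * payment n Q PS r i)"

(* u_i(Sigma | s_D): expected utility of i conditioned on Psi_D = s_D
   (convention: 0 if the conditioning event has probability 0) *)
definition cond_util :: "nat \<Rightarrow> ((nat \<Rightarrow> bool) \<Rightarrow> real) \<Rightarrow> (bool \<Rightarrow> real \<Rightarrow> real)
     \<Rightarrow> (nat \<Rightarrow> bool \<Rightarrow> real) \<Rightarrow> nat set \<Rightarrow> (nat \<Rightarrow> bool) \<Rightarrow> nat \<Rightarrow> real" where
  "cond_util n Q PS \<Sigma> D sD i =
     (\<Sum>\<psi>\<in>{\<psi>\<in>profiles {..<n}. \<forall>k\<in>D. \<psi> k = sD k}. Q \<psi> * exp_payment n Q PS \<Sigma> \<psi> i)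
     / prQ n Q (\<lambda>\<psi>. \<forall>k\<in>D. \<psi> k = sD k)"

definition interim_equilibrium :: "nat \<Rightarrow> ((nat \<Rightarrow> bool) \<Rightarrow> real) \<Rightarrow> (bool \<Rightarrow> real \<Rightarrow> real)
     \<Rightarrow> nat set set \<Rightarrow> (nat \<Rightarrow> bool \<Rightarrow> real) \<Rightarrow> bool" where
  "interim_equilibrium n Q PS \<D> \<Sigma> \<longleftrightarrow>
     \<not> (\<exists>D\<in>\<D>. \<exists>sD\<in>profiles D. \<exists>\<Sigma>'. valid_profile n \<Sigma>' \<and>
           (\<forall>i\<in>{..<n} - D. \<Sigma>' i = \<Sigma> i) \<and>
           (\<forall>i\<in>D. cond_util n Q PS \<Sigma>' D sD i > cond_util n Q PS \<Sigma> D sD i))"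

definition cond_prob_h :: "nat \<Rightarrow> ((nat \<Rightarrow> bool) \<Rightarrow> real) \<Rightarrow> nat set \<Rightarrow> (nat \<Rightarrow> bool) \<Rightarrow> nat \<Rightarrow> real" where
  "cond_prob_h n Q D sD j =
     prQ n Q (\<lambda>\<psi>. \<psi> j \<and> (\<forall>k\<in>D. \<psi> k = sD k)) / prQ n Q (\<lambda>\<psi>. \<forall>k\<in>D. \<psi> k = sD k)"

end

theory Submission
  imports Defs
begin

text \<open>Let the coalition \<open>D\<close> deviate to a common report \<open>r\<close>. For a member, the conditional
utility is \<open>(A + (n - d) S)/(n - 1)\<close>, where \<open>A\<close> collects the \<open>d - 1\<close> scores against fellow members
and \<open>S\<close> is the expected score against an outsider, whose chance of holding \<open>h\<close> is the
\<open>n\<close>-independent number \<open>p(s\<^sub>D)\<close>. If the two reports give different \<open>S\<close>, taking the better one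
gains \<open>n - d\<close> times a fixed positive gap, which eventually swamps the bounded term \<open>A\<close>. If they
give the same \<open>S\<close>, the report \<open>r\<close> maximising \<open>PS(r, P\<^sub>r)\<close> strictly improves \<open>A\<close>: in a mixed
profile every member has a fellow member who disagrees with it, and \<open>PS(\<not>s, P\<^sub>s) < PS(s, P\<^sub>s)\<close>.
Mixed profiles of positive probability exist because the prior is symmetric and \<open>P(h | \<ell>) > 0\<close>.\<close>

definition expected_score :: "(bool \<Rightarrow> real \<Rightarrow> real) \<Rightarrow> real \<Rightarrow> real \<Rightarrow> real" where
  "expected_score PS x q = x * PS True q + (1 - x) * PS False q"

lemma exp_payment_deterministic:
  assumes "\<forall>k<n. \<Sigma> k (\<psi> k) = (if g k then 1 else 0)"
  shows "exp_payment n Q PS \<Sigma> \<psi> i = payment n Q PS (restrict g {..<n}) i"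
proof -
  let ?r = "restrict g {..<n}"
  have r: "?r \<in> profiles {..<n}" by (simp add: profiles_def)
  have weight: "(\<Prod>k<n. rprob (\<Sigma> k (\<psi> k)) (r k)) = (if r = ?r then 1 else 0)"
    if "r \<in> profiles {..<n}" for r
  proof (cases "r = ?r")
    case False
    have "\<exists>k<n. r k \<noteq> g k"
    proof (rule ccontr)
      assume "\<not> (\<exists>k<n. r k \<noteq> g k)"
      then have "r = ?r" using that r unfolding profiles_def by (intro PiE_ext) auto
      then show False using False by simp
    qed
    then show ?thesis using assms False by (auto simp: rprob_def intro!: prod_zero)
  next
    case True
    then show ?thesis using assms by (auto simp: rprob_def intro!: prod.neutral)
  qed
  have "exp_payment n Q PS \<Sigma> \<psi> i
      = (\<Sum>r\<in>profiles {..<n}. if r = ?r then payment n Q PS r i else 0)"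
    unfolding exp_payment_def by (rule sum.cong) (auto simp: weight)
  also have "\<dots> = payment n Q PS ?r i"
    using r by (simp add: profiles_def finite_PiE)
  finally show ?thesis .
qed

lemma sum_score_conditional:
  assumes pos: "prQ n Q (\<lambda>\<psi>. \<forall>k\<in>D. \<psi> k = sD k) > 0"
    and cp: "cond_prob_h n Q D sD j = x"
  shows "(\<Sum>\<psi>\<in>{\<psi>\<in>profiles {..<n}. \<forall>k\<in>D. \<psi> k = sD k}. Q \<psi> * PS (\<psi> j) q)
       = prQ n Q (\<lambda>\<psi>. \<forall>k\<in>D. \<psi> k = sD k) * expected_score PS x q"
proof -
  define E where "E = {\<psi>\<in>profiles {..<n}. \<forall>k\<in>D. \<psi> k = sD k}"
  define Z where "Z = prQ n Q (\<lambda>\<psi>. \<forall>k\<in>D. \<psi> k = sD k)"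
  define X where "X = prQ n Q (\<lambda>\<psi>. \<psi> j \<and> (\<forall>k\<in>D. \<psi> k = sD k))"
  have finE: "finite E" unfolding E_def profiles_def by (simp add: finite_PiE)
  have Z: "Z = sum Q E" and X: "X = sum Q (E \<inter> {\<psi>. \<psi> j})"
    unfolding Z_def X_def E_def prQ_def by (auto intro: sum.cong)
  have X_Z: "X = x * Z" using cp pos unfolding cond_prob_h_def X_def Z_def by (simp add: field_simps)
  have rest: "sum Q (E \<inter> - {\<psi>. \<psi> j}) = Z - X"
    using finE Z X by (metis sum.Int_Diff Diff_eq add_diff_cancel_left')
  have "(\<Sum>\<psi>\<in>E. Q \<psi> * PS (\<psi> j) q)
      = (\<Sum>\<psi>\<in>E. if \<psi> j then Q \<psi> * PS True q else Q \<psi> * PS False q)"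
    by (rule sum.cong) auto
  also have "\<dots> = (\<Sum>\<psi>\<in>E \<inter> {\<psi>. \<psi> j}. Q \<psi> * PS True q)
      + (\<Sum>\<psi>\<in>E \<inter> - {\<psi>. \<psi> j}. Q \<psi> * PS False q)"
    using finE by (rule sum.If_cases)
  also have "\<dots> = X * PS True q + (Z - X) * PS False q"
    by (simp only: sum_distrib_right[symmetric] X[symmetric] rest)
  also have "\<dots> = Z * expected_score PS x q"
    by (simp add: X_Z expected_score_def algebra_simps)
  finally show ?thesis unfolding E_def Z_def .
qed

lemma cond_util_fixed_reports:
  assumes D: "D \<subseteq> {..<n}" and i: "i \<in> D"
    and pos: "prQ n Q (\<lambda>\<psi>. \<forall>k\<in>D. \<psi> k = sD k) > 0"
    and cp: "\<forall>j\<in>{..<n} - D. cond_prob_h n Q D sD j = x"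
    and reports: "\<forall>\<psi>\<in>profiles {..<n}. (\<forall>k\<in>D. \<psi> k = sD k) \<longrightarrow>
      (\<forall>k<n. \<Sigma> k (\<psi> k) = (if (if k \<in> D then f k else \<psi> k) then 1 else 0))"
  shows "cond_util n Q PS \<Sigma> D sD i =
     ((\<Sum>j\<in>D - {i}. PS (f j) (Pcond n Q (f i)))
       + (real n - real (card D)) * expected_score PS x (Pcond n Q (f i))) / (real n - 1)"
proof -
  define E where "E = {\<psi>\<in>profiles {..<n}. \<forall>k\<in>D. \<psi> k = sD k}"
  define Z where "Z = prQ n Q (\<lambda>\<psi>. \<forall>k\<in>D. \<psi> k = sD k)"
  define q where "q = Pcond n Q (f i)"
  define h where "h \<psi> j = PS (if j \<in> D then f j else \<psi> j) q" for \<psi> j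
  have finD: "finite D" using D finite_subset by blast
  have Z: "Z = sum Q E" unfolding Z_def E_def prQ_def by simp
  have "exp_payment n Q PS \<Sigma> \<psi> i = (\<Sum>j\<in>{..<n} - {i}. h \<psi> j) / (real n - 1)"
    if "\<psi> \<in> E" for \<psi>
    using exp_payment_deterministic[of n \<Sigma> \<psi> "\<lambda>k. if k \<in> D then f k else \<psi> k"]
      reports that D i
    unfolding E_def payment_def h_def q_def by (auto intro!: sum.cong)
  then have "(\<Sum>\<psi>\<in>E. Q \<psi> * exp_payment n Q PS \<Sigma> \<psi> i)
      = (\<Sum>j\<in>{..<n} - {i}. \<Sum>\<psi>\<in>E. Q \<psi> * h \<psi> j) / (real n - 1)"
    by (simp add: sum_divide_distrib[symmetric] sum_distrib_left sum.swap[of _ E])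
  also have "(\<Sum>j\<in>{..<n} - {i}. \<Sum>\<psi>\<in>E. Q \<psi> * h \<psi> j)
      = (\<Sum>j\<in>D - {i}. \<Sum>\<psi>\<in>E. Q \<psi> * h \<psi> j) + (\<Sum>j\<in>{..<n} - D. \<Sum>\<psi>\<in>E. Q \<psi> * h \<psi> j)"
    using D i finD by (subst sum.union_disjoint[symmetric]) (auto intro: sum.cong)
  also have "(\<Sum>j\<in>D - {i}. \<Sum>\<psi>\<in>E. Q \<psi> * h \<psi> j) = Z * (\<Sum>j\<in>D - {i}. PS (f j) q)"
    by (simp add: h_def Z sum_distrib_left sum_distrib_right mult.commute)
  also have "(\<Sum>j\<in>{..<n} - D. \<Sum>\<psi>\<in>E. Q \<psi> * h \<psi> j)
      = (\<Sum>j\<in>{..<n} - D. Z * expected_score PS x q)"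
    using sum_score_conditional[OF pos] cp
    unfolding h_def E_def Z_def by (auto intro!: sum.cong)
  also have "\<dots> = Z * ((real n - real (card D)) * expected_score PS x q)"
    using D finD card_mono[OF finite_lessThan D] by (simp add: card_Diff_subset)
  finally have "(\<Sum>\<psi>\<in>E. Q \<psi> * exp_payment n Q PS \<Sigma> \<psi> i) = Z *
      (((\<Sum>j\<in>D - {i}. PS (f j) q) + (real n - real (card D)) * expected_score PS x q) / (real n - 1))"
    by (simp add: algebra_simps)
  then show ?thesis
    using pos unfolding cond_util_def E_def[symmetric] Z_def[symmetric] q_def[symmetric]
    by (simp only: nonzero_mult_div_cancel_left less_irrefl)
qed

definition best_report :: "(bool \<Rightarrow> real) \<Rightarrow> (bool \<Rightarrow> real) \<Rightarrow> bool" where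
  "best_report S T = (if S True \<noteq> S False then S True > S False else T True \<ge> T False)"

lemma best_report_max: "S b \<le> S (best_report S T)"
  by (cases b; cases "best_report S T") (auto simp: best_report_def split: if_splits)

lemma best_report_tie:
  assumes "S b = S (best_report S T)"
  shows "T b \<le> T (best_report S T)"
  using assms
  by (cases b; cases "best_report S T") (auto simp: best_report_def split: if_splits)

lemma best_report_gap:
  assumes "S b < S (best_report S T)"
  shows "S (best_report S T) - S b = \<bar>S True - S False\<bar>"
  using assms
  by (cases b; cases "best_report S T") (auto simp: best_report_def split: if_splits)

lemma sum_mixed_less_unanimous:
  fixes PS :: "bool \<Rightarrow> real \<Rightarrow> real" and P :: "bool \<Rightarrow> real" and s :: "nat \<Rightarrow> bool"
  assumes fin: "finite D" and i: "i \<in> D"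
    and mixed: "\<exists>k\<in>D. s k" "\<exists>k\<in>D. \<not> s k"
    and sep: "\<And>b. PS (\<not> b) (P b) < PS b (P b)"
    and top: "PS (s i) (P (s i)) \<le> PS r (P r)"
  shows "(\<Sum>j\<in>D - {i}. PS (s j) (P (s i))) < (\<Sum>j\<in>D - {i}. PS r (P r))"
proof (rule sum_strict_mono_ex1)
  have "PS (s j) (P (s i)) \<le> PS (s i) (P (s i))" for j
    using sep[of "s i"] by (cases "s j = s i") auto
  then show "\<forall>j\<in>D - {i}. PS (s j) (P (s i)) \<le> PS r (P r)"
    using top order_trans by blast
  obtain k where k: "k \<in> D" "s k \<noteq> s i" using mixed by (cases "s i") auto
  then have "PS (s k) (P (s i)) < PS r (P r)"
    using sep[of "s i"] top by (simp add: eq_commute[of "s k"])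
  then show "\<exists>j\<in>D - {i}. PS (s j) (P (s i)) < PS r (P r)"
    using k by blast
qed (use fin in simp)

lemma unanimous_report_gain:
  fixes PS :: "bool \<Rightarrow> real \<Rightarrow> real" and P S :: "bool \<Rightarrow> real" and s :: "nat \<Rightarrow> bool"
  assumes fin: "finite D" and i: "i \<in> D"
    and mixed: "\<exists>k\<in>D. s k" "\<exists>k\<in>D. \<not> s k"
    and sep: "\<And>b. PS (\<not> b) (P b) < PS b (P b)"
    and bound: "\<And>b c. \<bar>PS b (P c)\<bar> \<le> B"
    and m: "m \<ge> 0"
    and S_le: "S (s i) \<le> S r"
    and tie: "S (s i) = S r \<Longrightarrow> PS (s i) (P (s i)) \<le> PS r (P r)"
    and gap: "S (s i) < S r \<Longrightarrow> 2 * (real (card D) - 1) * B < m * (S r - S (s i))"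
  shows "(\<Sum>j\<in>D - {i}. PS (s j) (P (s i))) + m * S (s i) < (\<Sum>j\<in>D - {i}. PS r (P r)) + m * S r"
proof (cases "S (s i) = S r")
  case True
  then show ?thesis
    using sum_mixed_less_unanimous[OF fin i mixed sep tie] by simp
next
  case False
  have D_ne: "card D > 0" using fin i card_gt_0_iff by blast
  then have card: "real (card (D - {i})) = real (card D) - 1"
    using fin i by simp
  have "(\<Sum>j\<in>D - {i}. PS (s j) (P (s i))) \<le> (real (card D) - 1) * B"
    using sum_bounded_above[of "D - {i}" "\<lambda>j. PS (s j) (P (s i))" B] bound card
    by (simp add: abs_le_iff)
  moreover have "- ((real (card D) - 1) * B) \<le> (\<Sum>j\<in>D - {i}. PS r (P r))"
    using mult_left_mono[of "- B" "PS r (P r)" "real (card D) - 1"] bound[of r r] card D_ne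
    by (simp add: abs_le_iff)
  moreover have "m * (S r - S (s i)) > 2 * (real (card D) - 1) * B"
    using gap S_le False by simp
  ultimately show ?thesis by (simp add: algebra_simps)
qed

lemma profiles_comp_permutes:
  assumes "\<psi> \<in> profiles A" and "\<pi> permutes A"
  shows "\<psi> \<circ> \<pi> \<in> profiles A"
  using assms unfolding profiles_def
  by (auto simp: PiE_iff extensional_def permutes_not_in)

lemma permutes_pair:
  assumes "a \<in> A" "b \<in> A" "c \<in> A" "e \<in> A" "a \<noteq> b" "c \<noteq> e"
  obtains \<pi> where "\<pi> permutes A" "\<pi> a = c" "\<pi> b = e"
proof
  define b' where "b' = transpose a c b"
  show "(transpose b' e \<circ> transpose a c) permutes A"
    using assms by (intro permutes_compose permutes_swap_id) (auto simp: b'_def transpose_def)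
  show "(transpose b' e \<circ> transpose a c) a = c"
    using assms by (auto simp: b'_def transpose_def)
  show "(transpose b' e \<circ> transpose a c) b = e"
    by (simp add: b'_def)
qed

lemma prQ_pos_witness:
  assumes "symmetric_prior n Q" and "prQ n Q E \<noteq> 0"
  obtains \<psi> where "\<psi> \<in> profiles {..<n}" "E \<psi>" "Q \<psi> > 0"
proof -
  obtain \<psi> where "\<psi> \<in> profiles {..<n}" "E \<psi>" "Q \<psi> \<noteq> 0"
    using assms(2) unfolding prQ_def by (metis (no_types, lifting) mem_Collect_eq sum.neutral)
  then show ?thesis
    using that assms(1) unfolding symmetric_prior_def by force
qed

lemma prQ_pos:
  assumes "symmetric_prior n Q" and "\<psi> \<in> profiles {..<n}" "E \<psi>" "Q \<psi> > 0"
  shows "prQ n Q E > 0"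
proof -
  have "Q \<psi> \<le> prQ n Q E"
    unfolding prQ_def using assms
    by (intro member_le_sum) (auto simp: symmetric_prior_def profiles_def finite_PiE)
  then show ?thesis using assms(4) by linarith
qed

text \<open>By symmetry, the positive-probability event \<open>\<Psi>\<^sub>0 = \<ell>, \<Psi>\<^sub>1 = h\<close> can be moved onto any
two members of \<open>D\<close>.\<close>

lemma exists_mixed_profile:
  assumes prior: "valid_prior n Q" and D: "D \<subseteq> {..<n}" and card: "card D \<ge> 2"
  obtains sD where "sD \<in> profiles D" "\<exists>k\<in>D. sD k" "\<exists>k\<in>D. \<not> sD k"
    "prQ n Q (\<lambda>\<psi>. \<forall>k\<in>D. \<psi> k = sD k) > 0"
proof -
  have sym: "symmetric_prior n Q" and n: "n \<ge> 2"
    using prior by (auto simp: valid_prior_def)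
  have "prQ n Q (\<lambda>\<psi>. \<psi> 0 = False \<and> \<psi> 1) \<noteq> 0"
    using prior unfolding valid_prior_def Pcond_def by auto
  then obtain \<psi> where \<psi>: "\<psi> \<in> profiles {..<n}" "\<psi> 0 = False \<and> \<psi> 1" "Q \<psi> > 0"
    by (rule prQ_pos_witness[OF sym])
  obtain a b where ab: "a \<in> D" "b \<in> D" "a \<noteq> b"
    using card by (auto simp: numeral_2_eq_2 card_le_Suc_iff)
  have "a \<in> {..<n}" "b \<in> {..<n}" "0 \<in> {..<n}" "1 \<in> {..<n}" using ab D n by auto
  then obtain \<pi> where \<pi>: "\<pi> permutes {..<n}" "\<pi> a = 0" "\<pi> b = 1"
    using permutes_pair[of a "{..<n}" b 0 1] ab(3) zero_neq_one by metis
  let ?sD = "restrict (\<psi> \<circ> \<pi>) D"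
  have "\<psi> \<circ> \<pi> \<in> profiles {..<n}" using \<psi>(1) \<pi>(1) by (rule profiles_comp_permutes)
  moreover have "Q (\<psi> \<circ> \<pi>) > 0"
    using sym \<psi>(1,3) \<pi>(1) unfolding symmetric_prior_def by simp
  ultimately have "prQ n Q (\<lambda>\<phi>. \<forall>k\<in>D. \<phi> k = ?sD k) > 0"
    by (intro prQ_pos[OF sym]) auto
  moreover have "?sD \<in> profiles D" by (simp add: profiles_def)
  moreover have "\<exists>k\<in>D. ?sD k" using ab(2) \<psi>(2) \<pi>(3) by force
  moreover have "\<exists>k\<in>D. \<not> ?sD k" using ab(1) \<psi>(2) \<pi>(2) by force
  ultimately show ?thesis using that by blast
qed

lemma truthful_not_interim_equilibrium:
  fixes PS :: "bool \<Rightarrow> real \<Rightarrow> real"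
  assumes n: "n \<ge> 2" and D: "D \<in> \<D>" "D \<subseteq> {..<n}"
    and sD: "sD \<in> profiles D" "\<exists>k\<in>D. sD k" "\<exists>k\<in>D. \<not> sD k"
    and pos: "prQ n Q (\<lambda>\<psi>. \<forall>k\<in>D. \<psi> k = sD k) > 0"
    and cp: "\<forall>j\<in>{..<n} - D. cond_prob_h n Q D sD j = x"
    and sep: "\<And>b. PS (\<not> b) (Pcond n Q b) < PS b (Pcond n Q b)"
    and bound: "\<And>b c. \<bar>PS b (Pcond n Q c)\<bar> \<le> B"
    and gap: "expected_score PS x (Pcond n Q True) \<noteq> expected_score PS x (Pcond n Q False) \<Longrightarrow>
      2 * (real (card D) - 1) * B < (real n - real (card D)) *
        \<bar>expected_score PS x (Pcond n Q True) - expected_score PS x (Pcond n Q False)\<bar>"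
  shows "\<not> interim_equilibrium n Q PS \<D> truthful"
proof -
  define S where "S b = expected_score PS x (Pcond n Q b)" for b
  define r where "r = best_report S (\<lambda>b. PS b (Pcond n Q b))"
  define \<Sigma> where "\<Sigma> k = (if k \<in> D then (\<lambda>_. if r then 1 else 0) else truthful k)" for k
  have fin: "finite D" using D(2) finite_subset by blast
  have "cond_util n Q PS truthful D sD i < cond_util n Q PS \<Sigma> D sD i" if i: "i \<in> D" for i
  proof -
    have "(\<Sum>j\<in>D - {i}. PS (sD j) (Pcond n Q (sD i))) + (real n - real (card D)) * S (sD i)
        < (\<Sum>j\<in>D - {i}. PS r (Pcond n Q r)) + (real n - real (card D)) * S r"
    proof (rule unanimous_report_gain[where PS = PS and P = "Pcond n Q", OF fin i sD(2,3) sep bound])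
      show "0 \<le> real n - real (card D)" using card_mono[OF finite_lessThan D(2)] by simp
      show "S (sD i) \<le> S r" unfolding r_def by (rule best_report_max)
      show "PS (sD i) (Pcond n Q (sD i)) \<le> PS r (Pcond n Q r)" if "S (sD i) = S r"
        using that unfolding r_def by (rule best_report_tie)
      show "2 * (real (card D) - 1) * B < (real n - real (card D)) * (S r - S (sD i))"
        if "S (sD i) < S r"
        using gap best_report_gap[OF that[unfolded r_def]] that unfolding S_def r_def by auto
    qed
    moreover have "cond_util n Q PS truthful D sD i = ((\<Sum>j\<in>D - {i}. PS (sD j) (Pcond n Q (sD i)))
        + (real n - real (card D)) * S (sD i)) / (real n - 1)"
      using cond_util_fixed_reports[OF D(2) i pos cp, of truthful sD]
      by (simp add: truthful_def S_def)
    moreover have "cond_util n Q PS \<Sigma> D sD i = ((\<Sum>j\<in>D - {i}. PS r (Pcond n Q r))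
        + (real n - real (card D)) * S r) / (real n - 1)"
      using cond_util_fixed_reports[OF D(2) i pos cp, of \<Sigma> "\<lambda>_. r"]
      by (simp add: \<Sigma>_def truthful_def S_def)
    ultimately show ?thesis using n by (simp add: divide_strict_right_mono)
  qed
  moreover have "valid_profile n \<Sigma>" by (simp add: valid_profile_def \<Sigma>_def truthful_def)
  moreover have "\<forall>i\<in>{..<n} - D. \<Sigma> i = truthful i" by (simp add: \<Sigma>_def)
  ultimately show ?thesis
    unfolding interim_equilibrium_def using D(1) sD(1) by blast
qed

lemma eventually_linear_exceeds:
  fixes c :: "'a \<Rightarrow> real"
  assumes "finite X"
  shows "\<forall>\<^sub>F n in sequentially. \<forall>x\<in>X. c x \<noteq> 0 \<longrightarrow> b < (real n - a) * \<bar>c x\<bar>"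
proof (rule eventually_ball_finite[OF assms], intro ballI)
  fix x
  show "\<forall>\<^sub>F n in sequentially. c x \<noteq> 0 \<longrightarrow> b < (real n - a) * \<bar>c x\<bar>"
  proof (cases "c x = 0")
    case False
    obtain N :: nat where N: "a + b / \<bar>c x\<bar> < real N" using reals_Archimedean2 by blast
    have "b < (real n - a) * \<bar>c x\<bar>" if "N \<le> n" for n
    proof -
      have "b / \<bar>c x\<bar> < real n - a" using N that by linarith
      then show ?thesis using False by (simp add: pos_divide_less_eq)
    qed
    then show ?thesis unfolding eventually_sequentially by blast
  qed simp
qed

theorem mainTheorem10:
  fixes PS :: "bool \<Rightarrow> real \<Rightarrow> real"
    and Q :: "nat \<Rightarrow> (nat \<Rightarrow> bool) \<Rightarrow> real"
    and \<D> :: "nat \<Rightarrow> nat set set"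
    and Dn :: "nat \<Rightarrow> nat set"
    and d N0 :: nat
    and ph phh phl :: real
  assumes proper: "strictly_proper PS"
    and sep_h: "PS True phh > PS False phh"
    and sep_l: "PS False phl > PS True phl"
    and d2: "d \<ge> 2"
    and inst: "\<forall>n\<ge>N0. valid_prior n (Q n) \<and> Ph n (Q n) = ph \<and>
                 Pcond n (Q n) True = phh \<and> Pcond n (Q n) False = phl"
    and fam: "\<forall>n\<ge>N0. (\<forall>D\<in>\<D> n. D \<subseteq> {..<n}) \<and> Dn n \<in> \<D> n \<and> card (Dn n) = d"
    and indep: "\<exists>p :: (nat \<Rightarrow> bool) \<Rightarrow> real. \<forall>n\<ge>N0. \<forall>sD\<in>profiles (Dn n).
                 (\<exists>k\<in>Dn n. sD k) \<and> (\<exists>k\<in>Dn n. \<not> sD k) \<longrightarrow>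
                 (\<forall>j\<in>{..<n} - Dn n. cond_prob_h n (Q n) (Dn n) sD j =
                    p (\<lambda>i\<in>{..<d}. sD (sorted_list_of_set (Dn n) ! i)))"
  shows "\<forall>\<^sub>F n in sequentially. \<not> interim_equilibrium n (Q n) PS (\<D> n) truthful"
proof -
  obtain p :: "(nat \<Rightarrow> bool) \<Rightarrow> real" where p: "\<forall>n\<ge>N0. \<forall>sD\<in>profiles (Dn n).
      (\<exists>k\<in>Dn n. sD k) \<and> (\<exists>k\<in>Dn n. \<not> sD k) \<longrightarrow>
      (\<forall>j\<in>{..<n} - Dn n. cond_prob_h n (Q n) (Dn n) sD j =
         p (\<lambda>i\<in>{..<d}. sD (sorted_list_of_set (Dn n) ! i)))"
    using indep by blast
  define B where "B = \<bar>PS True phh\<bar> + \<bar>PS False phh\<bar> + \<bar>PS True phl\<bar> + \<bar>PS False phl\<bar>"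
  define c where "c x = expected_score PS x phh - expected_score PS x phl" for x
  have "finite (p ` profiles {..<d})" by (simp add: profiles_def finite_PiE)
  from eventually_linear_exceeds[OF this, of c "2 * (real d - 1) * B" "real d"]
    eventually_ge_at_top[of N0]
  show ?thesis
  proof (rule eventually_mono[OF eventually_conj], elim conjE)
    fix n assume gaps: "\<forall>x\<in>p ` profiles {..<d}. c x \<noteq> 0 \<longrightarrow>
        2 * (real d - 1) * B < (real n - real d) * \<bar>c x\<bar>" and n: "N0 \<le> n"
    have prior: "valid_prior n (Q n)" and Pc: "Pcond n (Q n) = (\<lambda>b. if b then phh else phl)"
      using inst n by auto
    have D: "Dn n \<in> \<D> n" "Dn n \<subseteq> {..<n}" "card (Dn n) = d" using fam n by auto
    obtain sD where sD: "sD \<in> profiles (Dn n)" "\<exists>k\<in>Dn n. sD k" "\<exists>k\<in>Dn n. \<not> sD k"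
      "prQ n (Q n) (\<lambda>\<psi>. \<forall>k\<in>Dn n. \<psi> k = sD k) > 0"
      using exists_mixed_profile[OF prior D(2)] D(3) d2 by auto
    let ?x = "p (\<lambda>i\<in>{..<d}. sD (sorted_list_of_set (Dn n) ! i))"
    have "?x \<in> p ` profiles {..<d}" by (simp add: profiles_def)
    show "\<not> interim_equilibrium n (Q n) PS (\<D> n) truthful"
    proof (rule truthful_not_interim_equilibrium[where x = ?x and B = B, OF _ D(1,2) sD])
      show "n \<ge> 2" using prior by (simp add: valid_prior_def)
      show "\<forall>j\<in>{..<n} - Dn n. cond_prob_h n (Q n) (Dn n) sD j = ?x" using p n sD by blast
      show "PS (\<not> b) (Pcond n (Q n) b) < PS b (Pcond n (Q n) b)" for b
        using sep_h sep_l Pc by (cases b) auto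
      show "\<bar>PS b (Pcond n (Q n) e)\<bar> \<le> B" for b e
        by (cases b; cases e) (auto simp: B_def Pc)
    qed (use gaps \<open>?x \<in> p ` profiles {..<d}\<close> D(3) Pc in \<open>auto simp: c_def\<close>)
  qed
qed

end
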